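(* Extensibility is hereditary: if a pair $(\Gamma,\mathcal{K})$ is extensible (in degree $2d$), then so is any pair $(\Gamma',\mathcal{K}')$ subordinate to $(\Gamma,\mathcal{K})$.
   Context: All lattices even. For a graph $\Gamma$ (edges with multiplicities), let $\mathbb{Z}\Gamma$ be freely generated by the vertices with $v^2=-2$ and $u\cdot v$ the number of edges between $u\ne v$, and $\operatorname{Fano}_{2d}(\Gamma):=(\mathbb{Z}\Gamma+\mathbb{Z}h)/\ker$, with $h^2=2d>0$, $h\cdot v=1$ for all vertices; it is assumed hyperbolic. For an isotropic subgroup $\mathcal{K}$ of the discriminant group $\operatorname{Fano}(\Gamma)^\vee/\operatorname{Fano}(\Gamma)$ (with its $\mathbb{Q}/2\mathbb{Z}$-valued quadratic form), $\operatorname{Fano}(\Gamma,\mathcal{K})$ is the corresponding even finite index extension. For a root lattice $\operatorname{rt}(S,h)$ spanned by $\{r\in S:r^2=-2, r\cdot h=0\}$ and a Weyl chamber $\Delta$ with simple roots $\mathfrak{b}(\Delta)$, lines are $\operatorname{Fn}_\Delta(S,h)=\{l: l^2=-2, l\cdot h=1, l\cdot e\ge0\ \forall e\in\mathfrak{b}(\Delta)\}$. $(\Gamma,\mathcal{K})$ is extensible if there is a Weyl chamber $\Delta$ for $\operatorname{rt}(\operatorname{Fano}(\Gamma,\mathcal{K}),h)$ with $\Gamma\subset\operatorname{Fn}_\Delta(\operatorname{Fano}(\Gamma,\mathcal{K}),h)$. For an induced subgraph $\Gamma'\subset\Gamma$, $\mathcal{K}|_{\Gamma'}:=\bigl((\operatorname{Fano}(\Gamma')\otimes\mathbb{Q})\cap\operatorname{Fano}(\Gamma,\mathcal{K})\bigr)/\operatorname{Fano}(\Gamma')\subset\operatorname{Fano}(\Gamma')^\vee/\operatorname{Fano}(\Gamma')$,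 where $\operatorname{Fano}(\Gamma')$ is identified with the sublattice of $\operatorname{Fano}(\Gamma,\mathcal{K})$ spanned by $h$ and $\Gamma'$. $(\Gamma',\mathcal{K}')$ is subordinate to $(\Gamma,\mathcal{K})$ if $\Gamma'\subset\Gamma$ is an induced subgraph and $\mathcal{K}'\subset\mathcal{K}|_{\Gamma'}$. *)

theory Defs
  imports "HOL-Analysis.Analysis"
begin

text \<open>
A graph with multiplicities on a finite vertex type 'v is given by a
vertex set V and a symmetric multiplicity function m (m u v = number of edges
between u and v for u different from v; m v v is ignored).  An induced subgraph is
given by a subset V' of V with the same m.

The formal vector space: vectors in real^('v option); coordinate None is h,
coordinate Some v is the vertex v.  The vectors relevant for the graph with vertex
set V are those supported on None and Some ` V.  The lattice Fano(Gamma) is the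
quotient of the Z-span by the kernel; we work with preimages in the formal space
(every subgroup of Fano(Gamma) tensor R is represented by its preimage, which
contains the radical).  All notions below are invariant under the radical.
\<close>

type_synonym 'v fvec = "real ^ ('v option)"

definition idx :: "'v set \<Rightarrow> 'v option set" where
  "idx V = insert None (Some ` V)"

definition Wsp :: "'v::finite set \<Rightarrow> 'v fvec set" where
  "Wsp V = {x. \<forall>a. a \<notin> idx V \<longrightarrow> x $ a = 0}"

definition bvec :: "'v option \<Rightarrow> 'v::finite fvec" where
  "bvec a = (\<chi> b. if b = a then 1 else 0)"

abbreviation hvec :: "'v::finite fvec" where
  "hvec \<equiv> bvec None"

definition gram :: "nat \<Rightarrow> ('v \<Rightarrow> 'v \<Rightarrow> nat) \<Rightarrow> 'v option \<Rightarrow> 'v option \<Rightarrow> real" where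
  "gram d m a b = (case (a, b) of
      (None, None) \<Rightarrow> 2 * real d
    | (None, Some _) \<Rightarrow> 1
    | (Some _, None) \<Rightarrow> 1
    | (Some u, Some v) \<Rightarrow> (if u = v then -2 else real (m u v)))"

definition bil :: "nat \<Rightarrow> ('v \<Rightarrow> 'v \<Rightarrow> nat) \<Rightarrow> 'v::finite set \<Rightarrow> 'v fvec \<Rightarrow> 'v fvec \<Rightarrow> real" where
  "bil d m V x y = (\<Sum>a\<in>idx V. \<Sum>b\<in>idx V. x $ a * y $ b * gram d m a b)"

definition rad :: "nat \<Rightarrow> ('v \<Rightarrow> 'v \<Rightarrow> nat) \<Rightarrow> 'v::finite set \<Rightarrow> 'v fvec set" where
  "rad d m V = {x \<in> Wsp V. \<forall>y\<in>Wsp V. bil d m V x y = 0}"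

definition zspan :: "'v::finite set \<Rightarrow> 'v fvec set" where
  "zspan V = {x \<in> Wsp V. \<forall>a. x $ a \<in> \<int>}"

text \<open>Preimage of Fano_{2d}(Gamma) = (Z Gamma + Z h)/ker in the formal space.\<close>
definition Fano :: "nat \<Rightarrow> ('v \<Rightarrow> 'v \<Rightarrow> nat) \<Rightarrow> 'v::finite set \<Rightarrow> 'v fvec set" where
  "Fano d m V = {x + r | x r. x \<in> zspan V \<and> r \<in> rad d m V}"

text \<open>Hyperbolic: positive inertia index exactly one (no positive definite plane,
and some positive vector).\<close>
definition hyperbolic :: "nat \<Rightarrow> ('v \<Rightarrow> 'v \<Rightarrow> nat) \<Rightarrow> 'v::finite set \<Rightarrow> bool" where
  "hyperbolic d m V \<longleftrightarrow>
     (\<exists>x\<in>Wsp V. bil d m V x x > 0) \<and>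
     (\<forall>x\<in>Wsp V. \<forall>y\<in>Wsp V. \<not> (bil d m V x x > 0 \<and>
         bil d m V x x * bil d m V y y - (bil d m V x y)\<^sup>2 > 0))"

definition dual :: "nat \<Rightarrow> ('v \<Rightarrow> 'v \<Rightarrow> nat) \<Rightarrow> 'v::finite set \<Rightarrow> 'v fvec set" where
  "dual d m V = {x \<in> Wsp V. \<forall>y\<in>Fano d m V. bil d m V x y \<in> \<int>}"

definition coset :: "'v::finite fvec set \<Rightarrow> 'v fvec \<Rightarrow> 'v fvec set" where
  "coset S x = {x + y | y. y \<in> S}"

text \<open>Discriminant group Fano^vee / Fano, elements are cosets.\<close>
definition disc :: "nat \<Rightarrow> ('v \<Rightarrow> 'v \<Rightarrow> nat) \<Rightarrow> 'v::finite set \<Rightarrow> 'v fvec set set" where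
  "disc d m V = {coset (Fano d m V) x | x. x \<in> dual d m V}"

definition isotropic_subgroup ::
  "nat \<Rightarrow> ('v \<Rightarrow> 'v \<Rightarrow> nat) \<Rightarrow> 'v::finite set \<Rightarrow> 'v fvec set set \<Rightarrow> bool" where
  "isotropic_subgroup d m V K \<longleftrightarrow>
     K \<subseteq> disc d m V \<and>
     Fano d m V \<in> K \<and>
     (\<forall>A\<in>K. \<forall>B\<in>K. {a + b | a b. a \<in> A \<and> b \<in> B} \<in> K) \<and>
     (\<forall>A\<in>K. {- a | a. a \<in> A} \<in> K) \<and>
     (\<forall>A\<in>K. \<forall>a\<in>A. bil d m V a a / 2 \<in> \<int>)"

text \<open>Preimage of the even finite index extension Fano(Gamma, K).\<close>
definition FanoK :: "'v::finite fvec set set \<Rightarrow> 'v fvec set" where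
  "FanoK K = \<Union>K"

definition roots :: "nat \<Rightarrow> ('v \<Rightarrow> 'v \<Rightarrow> nat) \<Rightarrow> 'v::finite set \<Rightarrow> 'v fvec set \<Rightarrow> 'v fvec set" where
  "roots d m V S = {r \<in> S. bil d m V r r = -2 \<and> bil d m V r hvec = 0}"

definition chamber_space :: "nat \<Rightarrow> ('v \<Rightarrow> 'v \<Rightarrow> nat) \<Rightarrow> 'v::finite set \<Rightarrow> 'v fvec set \<Rightarrow> 'v fvec set" where
  "chamber_space d m V S =
     {x \<in> span (roots d m V S). \<forall>r\<in>roots d m V S. bil d m V x r \<noteq> 0}"

definition weyl_chamber ::
  "nat \<Rightarrow> ('v \<Rightarrow> 'v \<Rightarrow> nat) \<Rightarrow> 'v::finite set \<Rightarrow> 'v fvec set \<Rightarrow> 'v fvec set \<Rightarrow> bool" where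
  "weyl_chamber d m V S \<Delta> \<longleftrightarrow>
     (\<exists>x\<in>chamber_space d m V S. \<Delta> = connected_component_set (chamber_space d m V S) x)"

definition pos_roots ::
  "nat \<Rightarrow> ('v \<Rightarrow> 'v \<Rightarrow> nat) \<Rightarrow> 'v::finite set \<Rightarrow> 'v fvec set \<Rightarrow> 'v fvec set \<Rightarrow> 'v fvec set" where
  "pos_roots d m V S \<Delta> = {r \<in> roots d m V S. \<forall>x\<in>\<Delta>. bil d m V r x > 0}"

definition simple_roots ::
  "nat \<Rightarrow> ('v \<Rightarrow> 'v \<Rightarrow> nat) \<Rightarrow> 'v::finite set \<Rightarrow> 'v fvec set \<Rightarrow> 'v fvec set \<Rightarrow> 'v fvec set" where
  "simple_roots d m V S \<Delta> =
     {e \<in> pos_roots d m V S \<Delta>.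
        \<not> (\<exists>a\<in>pos_roots d m V S \<Delta>. \<exists>b\<in>pos_roots d m V S \<Delta>. e = a + b)}"

definition lines ::
  "nat \<Rightarrow> ('v \<Rightarrow> 'v \<Rightarrow> nat) \<Rightarrow> 'v::finite set \<Rightarrow> 'v fvec set \<Rightarrow> 'v fvec set \<Rightarrow> 'v fvec set" where
  "lines d m V S \<Delta> =
     {l \<in> S. bil d m V l l = -2 \<and> bil d m V l hvec = 1 \<and>
            (\<forall>e\<in>simple_roots d m V S \<Delta>. bil d m V l e \<ge> 0)}"

definition extensible ::
  "nat \<Rightarrow> ('v \<Rightarrow> 'v \<Rightarrow> nat) \<Rightarrow> 'v::finite set \<Rightarrow> 'v fvec set set \<Rightarrow> bool" where
  "extensible d m V K \<longleftrightarrow>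
     (\<exists>\<Delta>. weyl_chamber d m V (FanoK K) \<Delta> \<and>
          (\<forall>v\<in>V. bvec (Some v) \<in> lines d m V (FanoK K) \<Delta>))"

definition restr ::
  "nat \<Rightarrow> ('v \<Rightarrow> 'v \<Rightarrow> nat) \<Rightarrow> 'v::finite set \<Rightarrow> 'v fvec set set \<Rightarrow> 'v set \<Rightarrow> 'v fvec set set" where
  "restr d m V K V' = {coset (Fano d m V') x | x. x \<in> Wsp V' \<and> x \<in> FanoK K}"

definition subordinate ::
  "nat \<Rightarrow> ('v \<Rightarrow> 'v \<Rightarrow> nat) \<Rightarrow> 'v::finite set \<Rightarrow> 'v fvec set set \<Rightarrow>
     'v set \<Rightarrow> 'v fvec set set \<Rightarrow> bool" where
  "subordinate d m V' K' V K \<longleftrightarrow>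
     V' \<subseteq> V \<and> isotropic_subgroup d m V' K' \<and> K' \<subseteq> restr d m V K V'"

end

theory Submission
  imports Defs
begin

text \<open>
Pick a point x of the Weyl chamber \<Delta> and let x' be its orthogonal projection onto the span of
the roots of Fano(\<Gamma>',K'). Since h\<cdot>h > 0 and the lattice is hyperbolic, the form is negative
semidefinite on the orthogonal complement of h, so its null vectors there are orthogonal to the
whole complement; in particular so is the radical of Fano(\<Gamma>'). Every root r' of Fano(\<Gamma>',K')
is a root r of Fano(\<Gamma>,K) plus such a radical vector, hence r'\<cdot>x' = r\<cdot>x \<noteq> 0. Thus x' lies
in a Weyl chamber \<Delta>', and every root positive on \<Delta>' comes from a root positive on \<Delta>. A vertex
of \<Gamma>' pairs nonnegatively with the simple roots of \<Delta>, hence with all positive roots, by induction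
on the height r\<cdot>x; the height takes only finitely many values on roots, because Cauchy-Schwarz on
the complement of h bounds the integral pairings of a root with h and the vertices.
\<close>

lemma gram_sym: "\<forall>u v. m u v = m v u \<Longrightarrow> gram d m a b = gram d m b a"
  by (auto simp: gram_def split: option.splits)

lemma gram_Ints: "gram d m a b \<in> \<int>"
  by (auto simp: gram_def split: option.splits)

lemma bil_sym: "\<forall>u v. m u v = m v u \<Longrightarrow> bil d m V x y = bil d m V y x"
  unfolding bil_def by (subst sum.swap) (metis (no_types, lifting) gram_sym mult.commute sum.cong)

lemma bil_add_left: "bil d m V (x + y) z = bil d m V x z + bil d m V y z"
  unfolding bil_def by (simp add: distrib_right sum.distrib)

lemma bil_add_right: "bil d m V z (x + y) = bil d m V z x + bil d m V z y"
  unfolding bil_def by (simp add: distrib_right distrib_left sum.distrib)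

lemma bil_diff_left: "bil d m V (x - y) z = bil d m V x z - bil d m V y z"
  unfolding bil_def by (simp add: left_diff_distrib sum_subtractf)

lemma bil_diff_right: "bil d m V z (x - y) = bil d m V z x - bil d m V z y"
  unfolding bil_def by (simp add: left_diff_distrib right_diff_distrib sum_subtractf)

lemma bil_scale_left: "bil d m V (c *\<^sub>R x) z = c * bil d m V x z"
  unfolding bil_def by (simp add: sum_distrib_left mult.assoc)

lemma bil_scale_right: "bil d m V z (c *\<^sub>R x) = c * bil d m V z x"
  unfolding bil_def by (simp add: sum_distrib_left mult_ac)

lemma bil_zero_left [simp]: "bil d m V 0 z = 0"
  unfolding bil_def by simp

lemma sum_bvec_mult: "finite A \<Longrightarrow> b \<in> A \<Longrightarrow> (\<Sum>c\<in>A. bvec b $ c * (f c :: real)) = f b"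
  by (simp add: bvec_def if_distrib[of "\<lambda>t. t * _"] sum.delta cong: if_cong)

lemma bil_bvec_right:
  assumes "b \<in> idx V"
  shows "bil d m V x (bvec b) = (\<Sum>a\<in>idx V. x $ a * gram d m a b)"
proof -
  have "bil d m V x (bvec b) = (\<Sum>a\<in>idx V. \<Sum>c\<in>idx V. bvec b $ c * (x $ a * gram d m a c))"
    unfolding bil_def by (simp add: mult_ac)
  then show ?thesis using assms by (simp add: sum_bvec_mult)
qed

lemma bil_bvec_bvec: "a \<in> idx V \<Longrightarrow> b \<in> idx V \<Longrightarrow> bil d m V (bvec a) (bvec b) = gram d m a b"
  by (simp add: bil_bvec_right sum_bvec_mult)

lemma bil_expand_right: "bil d m V x y = (\<Sum>b\<in>idx V. y $ b * bil d m V x (bvec b))"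
proof -
  have "bil d m V x y = (\<Sum>b\<in>idx V. \<Sum>a\<in>idx V. y $ b * (x $ a * gram d m a b))"
    unfolding bil_def by (subst sum.swap) (simp add: mult_ac)
  also have "\<dots> = (\<Sum>b\<in>idx V. y $ b * bil d m V x (bvec b))"
    by (intro sum.cong refl) (simp add: bil_bvec_right sum_distrib_left)
  finally show ?thesis .
qed

lemma continuous_on_bil_right: "continuous_on A (bil d m V x)"
  by (subst bil_expand_right[abs_def])
    (intro continuous_on_sum continuous_on_mult_right linear_continuous_on bounded_linear_vec_nth)

lemma bil_hvec_hvec: "bil d m V hvec hvec = 2 * real d"
  by (simp add: bil_bvec_bvec idx_def gram_def)

lemma idx_mono: "V' \<subseteq> V \<Longrightarrow> idx V' \<subseteq> idx V"
  unfolding idx_def by auto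

lemma Wsp_mono: "V' \<subseteq> V \<Longrightarrow> Wsp V' \<subseteq> Wsp V"
  unfolding Wsp_def using idx_mono by blast

lemma subspace_Wsp: "subspace (Wsp V)"
  unfolding subspace_def Wsp_def by simp

lemma bvec_in_Wsp: "b \<in> idx V \<Longrightarrow> bvec b \<in> Wsp V"
  unfolding Wsp_def bvec_def by auto

lemma hvec_in_Wsp: "hvec \<in> Wsp V"
  by (simp add: bvec_in_Wsp idx_def)

lemma bil_subgraph:
  assumes "V' \<subseteq> V" "x \<in> Wsp V'" "y \<in> Wsp V'"
  shows "bil d m V x y = bil d m V' x y"
proof -
  have vanish: "x $ a = 0" "y $ a = 0" if "a \<notin> idx V'" for a
    using assms that unfolding Wsp_def by auto
  have "bil d m V x y = (\<Sum>a\<in>idx V'. \<Sum>b\<in>idx V. x $ a * y $ b * gram d m a b)"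
    unfolding bil_def by (rule sum.mono_neutral_right) (auto simp: idx_mono[OF assms(1)] vanish)
  also have "\<dots> = bil d m V' x y"
    unfolding bil_def
    by (intro sum.cong refl sum.mono_neutral_right) (auto simp: idx_mono[OF assms(1)] vanish)
  finally show ?thesis .
qed

definition hperp :: "nat \<Rightarrow> ('v \<Rightarrow> 'v \<Rightarrow> nat) \<Rightarrow> 'v::finite set \<Rightarrow> 'v fvec set" where
  "hperp d m V = {y \<in> Wsp V. bil d m V y hvec = 0}"

lemma subspace_hperp: "subspace (hperp d m V)"
  using subspace_Wsp[of V]
  unfolding subspace_def hperp_def by (simp add: bil_add_left bil_scale_left)

lemma hperp_mono: "V' \<subseteq> V \<Longrightarrow> hperp d m V' \<subseteq> hperp d m V"
  unfolding hperp_def using Wsp_mono[of V' V] bil_subgraph[of V' V _ hvec] hvec_in_Wsp[of V'] by auto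

lemma bil_add_scale_self:
  assumes "\<forall>u v. m u v = m v u"
  shows "bil d m V (y + t *\<^sub>R z) (y + t *\<^sub>R z) =
    bil d m V y y + 2 * t * bil d m V y z + t\<^sup>2 * bil d m V z z"
  using bil_sym[OF assms, of d V z y]
  by (simp add: bil_add_left bil_add_right bil_scale_left bil_scale_right power2_eq_square
      algebra_simps)

lemma bil_eq_on_span_insert:
  assumes "\<And>w. w \<in> span S \<Longrightarrow> bil d m V w x = bil d m V w p" "bil d m V s x = bil d m V s p"
  shows "\<forall>y\<in>span (insert s S). bil d m V y x = bil d m V y p"
proof
  fix y assume "y \<in> span (insert s S)"
  then obtain k w where "w \<in> span S" "y = w + k *\<^sub>R s"
    by (metis span_breakdown_eq diff_add_cancel)
  then show "bil d m V y x = bil d m V y p"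
    using assms by (simp add: bil_add_left bil_scale_left)
qed

lemma rad_subset_Wsp: "rad d m V \<subseteq> Wsp V"
  unfolding rad_def by blast

lemma rad_orthogonal: "\<rho> \<in> rad d m V \<Longrightarrow> y \<in> Wsp V \<Longrightarrow> bil d m V \<rho> y = 0"
  unfolding rad_def by blast

lemma zspan_subset_Wsp: "zspan V \<subseteq> Wsp V"
  unfolding zspan_def by blast

lemma zero_in_rad: "0 \<in> rad d m V"
  unfolding rad_def by (simp add: subspace_0[OF subspace_Wsp])

lemma bvec_in_zspan: "b \<in> idx V \<Longrightarrow> bvec b \<in> zspan V"
  unfolding zspan_def by (simp add: bvec_in_Wsp) (simp add: bvec_def)

lemma bvec_in_Fano:
  assumes "b \<in> idx V"
  shows "bvec b \<in> Fano d m V"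
proof -
  have "bvec b + 0 \<in> Fano d m V"
    unfolding Fano_def using bvec_in_zspan[OF assms] zero_in_rad by blast
  then show ?thesis
    by simp
qed

lemma FanoK_decomp:
  assumes "K \<subseteq> disc d m V" "r \<in> FanoK K"
  obtains y z \<rho> where "y \<in> dual d m V" "z \<in> zspan V" "\<rho> \<in> rad d m V" "r = y + z + \<rho>"
proof -
  obtain A where "A \<in> K" "r \<in> A"
    using assms(2) unfolding FanoK_def by blast
  then obtain y where "y \<in> dual d m V" "r \<in> coset (Fano d m V) y"
    using assms(1) unfolding disc_def by blast
  then show ?thesis
    using that unfolding coset_def Fano_def by (auto simp: add.assoc)
qed

lemma FanoK_subset_Wsp: "K \<subseteq> disc d m V \<Longrightarrow> FanoK K \<subseteq> Wsp V"
proof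
  fix r assume "K \<subseteq> disc d m V" "r \<in> FanoK K"
  then obtain y z \<rho> where decomp: "y \<in> dual d m V" "z \<in> zspan V" "\<rho> \<in> rad d m V" "r = y + z + \<rho>"
    by (rule FanoK_decomp)
  have "y \<in> Wsp V" "z \<in> Wsp V" "\<rho> \<in> Wsp V"
    using decomp(1) unfolding dual_def
    using decomp(2) zspan_subset_Wsp decomp(3) rad_subset_Wsp by blast+
  then show "r \<in> Wsp V"
    unfolding decomp(4) by (intro subspace_add[OF subspace_Wsp])
qed

lemma FanoK_pairing_Ints:
  assumes "K \<subseteq> disc d m V" "r \<in> FanoK K" "b \<in> idx V"
  shows "bil d m V r (bvec b) \<in> \<int>"
proof -
  obtain y z \<rho> where decomp: "y \<in> dual d m V" "z \<in> zspan V" "\<rho> \<in> rad d m V" "r = y + z + \<rho>"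
    using FanoK_decomp[OF assms(1,2)] .
  have "bil d m V y (bvec b) \<in> \<int>"
    using decomp(1) bvec_in_Fano[OF assms(3)] unfolding dual_def by blast
  moreover have "bil d m V z (bvec b) \<in> \<int>"
    using decomp(2) assms(3) by (auto simp: bil_bvec_right zspan_def gram_Ints)
  moreover have "bil d m V \<rho> (bvec b) = 0"
    using rad_orthogonal[OF decomp(3) bvec_in_Wsp[OF assms(3)]] .
  ultimately show ?thesis
    by (simp add: decomp(4) bil_add_left)
qed

lemma zspan_mono: "V' \<subseteq> V \<Longrightarrow> zspan V' \<subseteq> zspan V"
  unfolding zspan_def using Wsp_mono by blast

lemma zspan_add: "x \<in> zspan V \<Longrightarrow> y \<in> zspan V \<Longrightarrow> x + y \<in> zspan V"
  unfolding zspan_def using subspace_add[OF subspace_Wsp] by auto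

lemma FanoK_restr_decomp:
  assumes "V' \<subseteq> V" "K \<subseteq> disc d m V" "K' \<subseteq> restr d m V K V'" "r' \<in> FanoK K'"
  obtains r \<rho> where "r \<in> FanoK K" "r \<in> Wsp V'" "\<rho> \<in> rad d m V'" "r' = r + \<rho>"
proof -
  obtain A' where "A' \<in> K'" "r' \<in> A'"
    using assms(4) unfolding FanoK_def by blast
  then obtain x where x: "x \<in> Wsp V'" "x \<in> FanoK K" "r' \<in> coset (Fano d m V') x"
    using assms(3) unfolding restr_def by blast
  then obtain z \<rho> where z\<rho>: "z \<in> zspan V'" "\<rho> \<in> rad d m V'" "r' = (x + z) + \<rho>"
    unfolding coset_def Fano_def by (auto simp: add.assoc)
  \<comment> \<open>the class of \<open>x\<close> in the discriminant of \<open>V\<close> also contains \<open>x + z\<close>, since \<open>z \<in> zspan V\<close>\<close>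
  obtain B where B: "B \<in> K" "x \<in> B"
    using x(2) unfolding FanoK_def by blast
  then obtain y where y: "B = coset (Fano d m V) y"
    using assms(2) unfolding disc_def by blast
  then obtain z0 \<rho>0 where z0: "z0 \<in> zspan V" "\<rho>0 \<in> rad d m V" "x = y + (z0 + \<rho>0)"
    using B(2) unfolding coset_def Fano_def by blast
  have "(z0 + z) + \<rho>0 \<in> Fano d m V"
    unfolding Fano_def using zspan_add[OF z0(1)] zspan_mono[OF assms(1)] z\<rho>(1) z0(2) by blast
  moreover have "x + z = y + ((z0 + z) + \<rho>0)"
    using z0(3) by (simp add: algebra_simps)
  ultimately have "x + z \<in> FanoK K"
    using B(1) unfolding y FanoK_def coset_def by blast
  moreover have "x + z \<in> Wsp V'"
    using x(1) z\<rho>(1) zspan_subset_Wsp by (blast intro: subspace_add[OF subspace_Wsp])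
  ultimately show ?thesis
    using that z\<rho>(2,3) by blast
qed

lemma roots_subordinate_lift:
  assumes "\<forall>u v. m u v = m v u" "V' \<subseteq> V" "K \<subseteq> disc d m V" "K' \<subseteq> restr d m V K V'"
    and "r' \<in> roots d m V' (FanoK K')"
  obtains r \<rho> where "r \<in> roots d m V (FanoK K)" "\<rho> \<in> rad d m V'" "r' = r + \<rho>"
    and "\<And>w. w \<in> Wsp V' \<Longrightarrow> bil d m V' w r' = bil d m V w r"
proof -
  have r': "r' \<in> FanoK K'" "bil d m V' r' r' = -2" "bil d m V' r' hvec = 0"
    using assms(5) unfolding roots_def by auto
  obtain r \<rho> where r: "r \<in> FanoK K" "r \<in> Wsp V'" "\<rho> \<in> rad d m V'" "r' = r + \<rho>"
    using FanoK_restr_decomp[OF assms(2-4) r'(1)] .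
  have r'_r: "bil d m V' r' w = bil d m V' r w" if "w \<in> Wsp V'" for w
    using rad_orthogonal[OF r(3) that] by (simp add: r(4) bil_add_left)
  have "r' \<in> Wsp V'"
    unfolding r(4) using r(2,3) rad_subset_Wsp by (blast intro: subspace_add[OF subspace_Wsp])
  then have "bil d m V r r = -2"
    using r'(2) r'_r[OF r(2)] r'_r bil_sym[OF assms(1), of d V' r r']
    by (simp add: bil_subgraph[OF assms(2) r(2) r(2)])
  moreover have "bil d m V r hvec = 0"
    using r'(3) r'_r[OF hvec_in_Wsp] by (simp add: bil_subgraph[OF assms(2) r(2) hvec_in_Wsp])
  ultimately have "r \<in> roots d m V (FanoK K)"
    using r(1) unfolding roots_def by blast
  moreover have "bil d m V' w r' = bil d m V w r" if "w \<in> Wsp V'" for w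
    using rad_orthogonal[OF r(3) that] bil_subgraph[OF assms(2) that r(2)]
      bil_sym[OF assms(1), of d V' w \<rho>]
    by (simp add: r(4) bil_add_right)
  ultimately show ?thesis
    using that r(3,4) by blast
qed

lemma pos_rootsI:
  assumes "\<forall>u v. m u v = m v u" "weyl_chamber d m V S \<Delta>" "x \<in> \<Delta>"
    and "r \<in> roots d m V S" "bil d m V r x > 0"
  shows "r \<in> pos_roots d m V S \<Delta>"
proof -
  obtain x0 where \<Delta>: "\<Delta> = connected_component_set (chamber_space d m V S) x0"
    using assms(2) unfolding weyl_chamber_def by blast
  have "\<Delta> \<subseteq> chamber_space d m V S"
    unfolding \<Delta> by (rule connected_component_subset)
  then have "bil d m V y r \<noteq> 0" if "y \<in> \<Delta>" for y
    using that assms(4) unfolding chamber_space_def by blast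
  then have nonzero: "bil d m V r y \<noteq> 0" if "y \<in> \<Delta>" for y
    using that bil_sym[OF assms(1), of d V r y] by simp
  have "connected (bil d m V r ` \<Delta>)"
    unfolding \<Delta>
    by (intro connected_continuous_image continuous_on_bil_right connected_connected_component)
  then have interval: "\<forall>a\<in>bil d m V r ` \<Delta>. \<forall>b\<in>bil d m V r ` \<Delta>. \<forall>c.
      a \<le> c \<longrightarrow> c \<le> b \<longrightarrow> c \<in> bil d m V r ` \<Delta>"
    unfolding connected_iff_interval .
  have "bil d m V r y > 0" if "y \<in> \<Delta>" for y
  proof (rule ccontr)
    assume "\<not> bil d m V r y > 0"
    then have "0 \<in> bil d m V r ` \<Delta>"
      using interval[rule_format, of "bil d m V r y" "bil d m V r x" 0] that assms(3,5) by simp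
    then show False
      using nonzero by (auto simp: image_iff)
  qed
  then show ?thesis
    using assms(4) unfolding pos_roots_def by blast
qed

lemma roots_subset_hperp: "K \<subseteq> disc d m V \<Longrightarrow> roots d m V (FanoK K) \<subseteq> hperp d m V"
  using FanoK_subset_Wsp unfolding roots_def hperp_def by blast

lemma Ints_abs_le_square: "k \<in> \<int> \<Longrightarrow> \<bar>k :: real\<bar> \<le> k\<^sup>2"
proof (cases "k = 0")
  case False
  assume "k \<in> \<int>"
  then have "1 \<le> \<bar>k\<bar>"
    using False by (rule Ints_nonzero_abs_ge1)
  then have "\<bar>k\<bar> * 1 \<le> \<bar>k\<bar> * \<bar>k\<bar>"
    by (intro mult_left_mono) auto
  then show ?thesis
    by (simp add: power2_eq_square)
qed simp

lemma finite_Ints_square_le: "finite {k :: real. k \<in> \<int> \<and> k\<^sup>2 \<le> C}"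
proof (rule finite_subset)
  show "{k :: real. k \<in> \<int> \<and> k\<^sup>2 \<le> C} \<subseteq> {k \<in> \<int>. - \<bar>C\<bar> \<le> k \<and> k \<le> \<bar>C\<bar>}"
  proof
    fix k :: real assume "k \<in> {k. k \<in> \<int> \<and> k\<^sup>2 \<le> C}"
    then have "k \<in> \<int>" "\<bar>k\<bar> \<le> \<bar>C\<bar>"
      using Ints_abs_le_square[of k] by auto
    then show "k \<in> {k \<in> \<int>. - \<bar>C\<bar> \<le> k \<and> k \<le> \<bar>C\<bar>}"
      by auto
  qed
qed (rule finite_int_segment)
lemma nonneg_of_nonneg_on_indecomposables:
  fixes ht g :: "'a::plus \<Rightarrow> real"
  assumes fin: "finite (ht ` P)" and pos: "\<And>r. r \<in> P \<Longrightarrow> ht r > 0"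
    and ht_add: "\<And>a b. ht (a + b) = ht a + ht b" and g_add: "\<And>a b. g (a + b) = g a + g b"
    and indec: "\<And>e. e \<in> P \<Longrightarrow> \<not> (\<exists>a\<in>P. \<exists>b\<in>P. e = a + b) \<Longrightarrow> g e \<ge> 0"
    and "r \<in> P"
  shows "g r \<ge> 0"
  using \<open>r \<in> P\<close>
proof (induction r rule: measure_induct_rule[where f = "\<lambda>r. card {t \<in> ht ` P. t < ht r}"])
  case (less r)
  show ?case
  proof (cases "\<exists>a\<in>P. \<exists>b\<in>P. r = a + b")
    case False
    then show ?thesis
      using indec less.prems by blast
  next
    case True
    then obtain a b where ab: "a \<in> P" "b \<in> P" "r = a + b"
      by blast
    have smaller: "card {t \<in> ht ` P. t < ht c} < card {t \<in> ht ` P. t < ht r}"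
      if "c \<in> P" "ht c < ht r" for c
      by (rule psubset_card_mono) (use fin that in auto)
    have "ht a < ht r" "ht b < ht r"
      using ab pos ht_add by fastforce+
    then have "g a \<ge> 0" "g b \<ge> 0"
      using less.IH smaller ab by blast+
    then show ?thesis
      using ab(3) g_add by simp
  qed
qed

locale hyperbolic_graph =
  fixes d :: nat and m :: "'v::finite \<Rightarrow> 'v \<Rightarrow> nat" and V :: "'v set"
  assumes d_pos: "0 < d"
    and m_sym: "\<forall>u v. m u v = m v u"
    and hyperbolic: "hyperbolic d m V"
begin

lemma bil_commute: "bil d m V x y = bil d m V y x"
  using bil_sym[OF m_sym] .

lemma hperp_nonpos:
  assumes "y \<in> hperp d m V"
  shows "bil d m V y y \<le> 0"
proof -
  have "bil d m V hvec y = 0"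
    using assms by (simp add: hperp_def bil_commute)
  then have "\<not> 2 * real d * bil d m V y y > 0"
    using hyperbolic hvec_in_Wsp assms d_pos
    unfolding hyperbolic_def hperp_def by (force simp: bil_hvec_hvec)
  then show ?thesis
    using d_pos by (simp add: zero_less_mult_iff)
qed

lemma hperp_null_orthogonal:
  assumes "y \<in> hperp d m V" "z \<in> hperp d m V" "bil d m V y y = 0"
  shows "bil d m V y z = 0"
proof (rule ccontr)
  assume ne: "bil d m V y z \<noteq> 0"
  \<comment> \<open>along the line through \<open>z\<close> in direction \<open>y\<close> the form is affine with nonzero slope\<close>
  define t where "t = (1 - bil d m V z z) / (2 * bil d m V y z)"
  have "z + t *\<^sub>R y \<in> hperp d m V"
    by (intro subspace_add subspace_scale subspace_hperp assms)
  then have "bil d m V (z + t *\<^sub>R y) (z + t *\<^sub>R y) \<le> 0"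
    by (rule hperp_nonpos)
  moreover have "bil d m V (z + t *\<^sub>R y) (z + t *\<^sub>R y) = bil d m V z z + 2 * t * bil d m V y z"
    using assms(3) by (simp add: bil_add_scale_self[OF m_sym] bil_commute[of z y])
  moreover have "bil d m V z z + 2 * t * bil d m V y z = 1"
    using ne by (simp add: t_def field_simps)
  ultimately show False
    by simp
qed

lemma hperp_cauchy_schwarz:
  assumes "y \<in> hperp d m V" "z \<in> hperp d m V"
  shows "(bil d m V y z)\<^sup>2 \<le> bil d m V y y * bil d m V z z"
proof (cases "bil d m V z z = 0")
  case True
  then show ?thesis
    using hperp_null_orthogonal[OF assms(2,1) True] bil_commute[of z y] by simp
next
  case False
  then have zz: "bil d m V z z < 0"
    using hperp_nonpos[OF assms(2)] by simp
  define t where "t = - bil d m V y z / bil d m V z z"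
  have "y + t *\<^sub>R z \<in> hperp d m V"
    by (intro subspace_add subspace_scale subspace_hperp assms)
  moreover have "bil d m V (y + t *\<^sub>R z) (y + t *\<^sub>R z) =
      bil d m V y y - (bil d m V y z)\<^sup>2 / bil d m V z z"
    unfolding bil_add_scale_self[OF m_sym]
    using False by (simp add: t_def power2_eq_square field_simps)
  ultimately have "bil d m V y y \<le> (bil d m V y z)\<^sup>2 / bil d m V z z"
    using hperp_nonpos by fastforce
  then show ?thesis
    using zz by (simp add: neg_le_divide_eq mult.commute)
qed

lemma projection_onto_span_insert:
  assumes S: "S \<subseteq> hperp d m V" and s: "s \<in> hperp d m V" and p: "p \<in> hperp d m V"
    and proj_S: "\<And>q. q \<in> hperp d m V \<Longrightarrow>
      \<exists>x\<in>span S. \<forall>y\<in>span S. bil d m V y x = bil d m V y q"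
  shows "\<exists>x\<in>span (insert s S). \<forall>y\<in>span (insert s S). bil d m V y x = bil d m V y p"
proof -
  have span_S: "span S \<subseteq> span (insert s S)"
    by (rule span_mono) auto
  obtain x0 where x0: "x0 \<in> span S" "\<And>y. y \<in> span S \<Longrightarrow> bil d m V y x0 = bil d m V y p"
    using proj_S[OF p] by blast
  obtain w0 where w0: "w0 \<in> span S" "\<And>y. y \<in> span S \<Longrightarrow> bil d m V y w0 = bil d m V y s"
    using proj_S[OF s] by blast
  define u where "u = s - w0"
  have u_orth: "bil d m V w u = 0" if "w \<in> span S" for w
    using that by (simp add: u_def bil_diff_right w0(2))
  have u_span: "u \<in> span (insert s S)"
    unfolding u_def using w0(1) span_S by (meson insertI1 span_base span_diff subsetD)
  show ?thesis
  proof (cases "bil d m V s u = 0")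
    case False
    define x where "x = x0 + (bil d m V s (p - x0) / bil d m V s u) *\<^sub>R u"
    have "x \<in> span (insert s S)"
      unfolding x_def using x0(1) span_S u_span by (meson span_add span_scale subsetD)
    moreover have "\<forall>y\<in>span (insert s S). bil d m V y x = bil d m V y p"
      using False
      by (intro bil_eq_on_span_insert)
        (simp_all add: x_def bil_add_right bil_scale_right bil_diff_right u_orth x0(2))
    ultimately show ?thesis
      by blast
  next
    case True
    \<comment> \<open>then \<open>u\<close> is a null vector of \<open>hperp\<close>, hence orthogonal to all of it\<close>
    have w0_hperp: "w0 \<in> hperp d m V" and x0_hperp: "x0 \<in> hperp d m V"
      using S w0(1) x0(1) span_minimal[OF S subspace_hperp] by auto
    have "u \<in> hperp d m V"
      unfolding u_def by (intro subspace_diff subspace_hperp s w0_hperp)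
    moreover have "bil d m V u u = 0"
      using True u_orth[OF w0(1)] by (simp add: u_def bil_diff_left)
    ultimately have u_null: "bil d m V u z = 0" if "z \<in> hperp d m V" for z
      using hperp_null_orthogonal that by blast
    have "bil d m V s x0 = bil d m V s p"
      using u_null[OF x0_hperp] u_null[OF p] x0(2)[OF w0(1)]
      by (simp add: u_def bil_diff_left)
    then show ?thesis
      using bil_eq_on_span_insert[of S d m V x0 p s] x0 span_S by blast
  qed
qed

lemma exists_projection_onto_span:
  assumes "S \<subseteq> hperp d m V" "p \<in> hperp d m V"
  obtains x where "x \<in> span S" "\<And>y. y \<in> span S \<Longrightarrow> bil d m V y x = bil d m V y p"
proof -
  obtain T where T: "T \<subseteq> S" "independent T" "S \<subseteq> span T"
    using maximal_independent_subset by blast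
  have span_T: "span T = span S"
    using T span_eq span_superset by blast
  have "finite T"
    using T(2) by (rule finiteI_independent)
  moreover have "T \<subseteq> hperp d m V"
    using T(1) assms(1) by blast
  ultimately have "\<forall>q\<in>hperp d m V. \<exists>x\<in>span T. \<forall>y\<in>span T. bil d m V y x = bil d m V y q"
  proof (induction T rule: finite_induct)
    case empty
    then show ?case by simp
  next
    case (insert s T)
    then show ?case
      using projection_onto_span_insert[of T s] by auto
  qed
  then show ?thesis
    using that assms(2) span_T by blast
qed

lemma hperp_pairing_bounded:
  assumes "w \<in> Wsp V"
  obtains C where "\<And>r. r \<in> hperp d m V \<Longrightarrow> bil d m V r r = -2 \<Longrightarrow> (bil d m V r w)\<^sup>2 \<le> C"
proof -
  define w' where "w' = w - (bil d m V w hvec / (2 * real d)) *\<^sub>R hvec"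
  have "w' \<in> Wsp V"
    unfolding w'_def by (intro subspace_diff subspace_scale subspace_Wsp assms hvec_in_Wsp)
  moreover have "bil d m V w' hvec = 0"
    unfolding w'_def using d_pos by (simp add: bil_diff_left bil_scale_left bil_hvec_hvec)
  ultimately have w': "w' \<in> hperp d m V"
    unfolding hperp_def by blast
  have "(bil d m V r w)\<^sup>2 \<le> - 2 * bil d m V w' w'"
    if "r \<in> hperp d m V" "bil d m V r r = -2" for r
  proof -
    have "bil d m V r w' = bil d m V r w"
      using that(1) unfolding w'_def hperp_def
      by (simp add: bil_diff_right bil_scale_right bil_commute[of r hvec])
    then show ?thesis
      using hperp_cauchy_schwarz[OF that(1) w'] that(2) by simp
  qed
  then show ?thesis
    using that by blast
qed

lemma finite_root_heights:
  assumes "K \<subseteq> disc d m V"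
  shows "finite ((\<lambda>r. bil d m V r x) ` roots d m V (FanoK K))"
proof -
  let ?R = "roots d m V (FanoK K)"
  have "\<forall>b\<in>idx V. \<exists>C. \<forall>r\<in>hperp d m V. bil d m V r r = -2 \<longrightarrow> (bil d m V r (bvec b))\<^sup>2 \<le> C"
    by (metis hperp_pairing_bounded bvec_in_Wsp)
  then obtain C where C: "\<And>b r. b \<in> idx V \<Longrightarrow> r \<in> hperp d m V \<Longrightarrow> bil d m V r r = -2 \<Longrightarrow>
      (bil d m V r (bvec b))\<^sup>2 \<le> C b"
    by (metis bchoice)
  \<comment> \<open>a root is determined, as far as \<open>x\<close> is concerned, by its integral pairings with the basis\<close>
  define pairings where "pairings r = restrict (\<lambda>b. bil d m V r (bvec b)) (idx V)" for r
  have "pairings ` ?R \<subseteq> PiE (idx V) (\<lambda>b. {k. k \<in> \<int> \<and> k\<^sup>2 \<le> C b})"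
    using C FanoK_pairing_Ints[OF assms] roots_subset_hperp[OF assms]
    unfolding pairings_def roots_def by fastforce
  then have "finite (pairings ` ?R)"
    by (rule finite_subset) (simp add: finite_PiE finite_Ints_square_le)
  moreover have "bil d m V r x = (\<Sum>b\<in>idx V. x $ b * pairings r b)" for r
    unfolding pairings_def by (subst bil_expand_right) simp
  then have "(\<lambda>r. bil d m V r x) ` ?R = (\<lambda>f. \<Sum>b\<in>idx V. x $ b * f b) ` pairings ` ?R"
    by (simp add: image_image)
  ultimately show ?thesis
    by simp
qed

lemma pos_roots_pairing_nonneg:
  assumes "K \<subseteq> disc d m V" "weyl_chamber d m V (FanoK K) \<Delta>"
    and "\<forall>e\<in>simple_roots d m V (FanoK K) \<Delta>. bil d m V l e \<ge> 0"
    and "r \<in> pos_roots d m V (FanoK K) \<Delta>"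
  shows "bil d m V l r \<ge> 0"
proof -
  obtain x where "x \<in> \<Delta>"
    using assms(2) unfolding weyl_chamber_def by (metis connected_component_refl mem_Collect_eq)
  have "finite ((\<lambda>r. bil d m V r x) ` pos_roots d m V (FanoK K) \<Delta>)"
    using finite_root_heights[OF assms(1)] unfolding pos_roots_def
    by (rule finite_subset[rotated]) blast
  then show ?thesis
  proof (rule nonneg_of_nonneg_on_indecomposables)
    show "bil d m V r x > 0" if "r \<in> pos_roots d m V (FanoK K) \<Delta>" for r
      using that \<open>x \<in> \<Delta>\<close> unfolding pos_roots_def by blast
    show "bil d m V l e \<ge> 0"
      if "e \<in> pos_roots d m V (FanoK K) \<Delta>"
        "\<not> (\<exists>a\<in>pos_roots d m V (FanoK K) \<Delta>. \<exists>b\<in>pos_roots d m V (FanoK K) \<Delta>. e = a + b)" for e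
      using that assms(3) unfolding simple_roots_def by blast
  qed (simp_all add: bil_add_left bil_add_right assms(4))
qed

lemma rad_subgraph_orthogonal_hperp:
  assumes "V' \<subseteq> V" "\<rho> \<in> rad d m V'" "z \<in> hperp d m V"
  shows "bil d m V \<rho> z = 0"
proof -
  have \<rho>: "\<rho> \<in> Wsp V'"
    using assms(2) rad_subset_Wsp by blast
  then have "\<rho> \<in> hperp d m V'"
    unfolding hperp_def using rad_orthogonal[OF assms(2) hvec_in_Wsp] by blast
  then have "\<rho> \<in> hperp d m V"
    using hperp_mono[OF assms(1)] by blast
  moreover have "bil d m V \<rho> \<rho> = 0"
    using rad_orthogonal[OF assms(2) \<rho>] bil_subgraph[OF assms(1) \<rho> \<rho>] by simp
  ultimately show ?thesis
    using hperp_null_orthogonal assms(3) by blast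
qed

lemma subgraph_roots_projection:
  assumes "V' \<subseteq> V" "K' \<subseteq> disc d m V'" "x \<in> hperp d m V"
  obtains x' where "x' \<in> span (roots d m V' (FanoK K'))"
    and "\<And>r' \<rho>. r' \<in> roots d m V' (FanoK K') \<Longrightarrow> \<rho> \<in> rad d m V' \<Longrightarrow>
      bil d m V' r' x' = bil d m V (r' - \<rho>) x"
proof -
  let ?R' = "roots d m V' (FanoK K')"
  have R'_hperp: "?R' \<subseteq> hperp d m V'"
    using roots_subset_hperp[OF assms(2)] .
  then obtain x' where x': "x' \<in> span ?R'" "\<And>y. y \<in> span ?R' \<Longrightarrow> bil d m V y x' = bil d m V y x"
    using exists_projection_onto_span hperp_mono[OF assms(1)] assms(3) by (metis order_trans)
  have "x' \<in> Wsp V'"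
    using x'(1) span_minimal[OF R'_hperp subspace_hperp] unfolding hperp_def by blast
  moreover have "bil d m V' r' x' = bil d m V (r' - \<rho>) x"
    if r': "r' \<in> ?R'" and \<rho>: "\<rho> \<in> rad d m V'" for r' \<rho>
  proof -
    have "r' \<in> Wsp V'"
      using r' R'_hperp unfolding hperp_def by blast
    then have "bil d m V' r' x' = bil d m V r' x"
      using bil_subgraph[OF assms(1) _ \<open>x' \<in> Wsp V'\<close>] x'(2)[OF span_base[OF r']] by simp
    also have "\<dots> = bil d m V (r' - \<rho>) x"
      using rad_subgraph_orthogonal_hperp[OF assms(1) \<rho> assms(3)] by (simp add: bil_diff_left)
    finally show ?thesis .
  qed
  ultimately show ?thesis
    using that x'(1) by blast
qed

lemma subordinate_chamber:
  assumes "V' \<subseteq> V" "K \<subseteq> disc d m V" "K' \<subseteq> disc d m V'" "K' \<subseteq> restr d m V K V'"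
    and "weyl_chamber d m V (FanoK K) \<Delta>"
  obtains \<Delta>' where "weyl_chamber d m V' (FanoK K') \<Delta>'"
    and "\<And>e. e \<in> pos_roots d m V' (FanoK K') \<Delta>' \<Longrightarrow>
      \<exists>r\<in>pos_roots d m V (FanoK K) \<Delta>. \<forall>w\<in>Wsp V'. bil d m V' w e = bil d m V w r"
proof -
  let ?R' = "roots d m V' (FanoK K')"
  obtain x where x: "x \<in> chamber_space d m V (FanoK K)"
    and \<Delta>: "\<Delta> = connected_component_set (chamber_space d m V (FanoK K)) x"
    using assms(5) unfolding weyl_chamber_def by blast
  have "x \<in> hperp d m V"
    using x span_minimal[OF roots_subset_hperp[OF assms(2)] subspace_hperp]
    unfolding chamber_space_def by blast
  then obtain x' where x': "x' \<in> span ?R'"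
    and proj: "\<And>r' \<rho>. r' \<in> ?R' \<Longrightarrow> \<rho> \<in> rad d m V' \<Longrightarrow> bil d m V' r' x' = bil d m V (r' - \<rho>) x"
    using subgraph_roots_projection[OF assms(1,3)] by blast
  have lift: "\<exists>r\<in>roots d m V (FanoK K). bil d m V' r' x' = bil d m V r x \<and>
      (\<forall>w\<in>Wsp V'. bil d m V' w r' = bil d m V w r)" if r': "r' \<in> ?R'" for r'
  proof -
    obtain r \<rho> where r: "r \<in> roots d m V (FanoK K)" "\<rho> \<in> rad d m V'" "r' = r + \<rho>"
      and pairing: "\<And>w. w \<in> Wsp V' \<Longrightarrow> bil d m V' w r' = bil d m V w r"
      using roots_subordinate_lift[OF m_sym assms(1,2,4) r'] by blast
    have "bil d m V' r' x' = bil d m V r x"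
      using proj[OF r' r(2)] r(3) by simp
    then show ?thesis
      using r(1) pairing by blast
  qed
  have "bil d m V' x' r' \<noteq> 0" if r': "r' \<in> ?R'" for r'
  proof -
    obtain r where "r \<in> roots d m V (FanoK K)" "bil d m V' r' x' = bil d m V r x"
      using lift[OF r'] by blast
    moreover have "bil d m V x r \<noteq> 0" if "r \<in> roots d m V (FanoK K)" for r
      using x that unfolding chamber_space_def by blast
    ultimately show ?thesis
      by (simp add: bil_sym[OF m_sym, of d V' x'] bil_sym[OF m_sym, of d V x])
  qed
  then have x'_chamber: "x' \<in> chamber_space d m V' (FanoK K')"
    using x' unfolding chamber_space_def by blast
  define \<Delta>' where "\<Delta>' = connected_component_set (chamber_space d m V' (FanoK K')) x'"
  show ?thesis
  proof
    show "weyl_chamber d m V' (FanoK K') \<Delta>'"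
      unfolding weyl_chamber_def \<Delta>'_def using x'_chamber by blast
  next
    fix e assume e: "e \<in> pos_roots d m V' (FanoK K') \<Delta>'"
    have "x' \<in> \<Delta>'" "x \<in> \<Delta>"
      unfolding \<Delta>'_def \<Delta> using x'_chamber x by simp_all
    then have "e \<in> ?R'" "bil d m V' e x' > 0"
      using e unfolding pos_roots_def by auto
    then obtain r where "r \<in> roots d m V (FanoK K)" "bil d m V r x > 0"
      "\<forall>w\<in>Wsp V'. bil d m V' w e = bil d m V w r"
      using lift by fastforce
    then show "\<exists>r\<in>pos_roots d m V (FanoK K) \<Delta>. \<forall>w\<in>Wsp V'. bil d m V' w e = bil d m V w r"
      using pos_rootsI[OF m_sym assms(5) \<open>x \<in> \<Delta>\<close>] by blast
  qed
qed

end

lemma vertex_in_lines: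
  assumes "isotropic_subgroup d m V K" "v \<in> V"
    and "\<forall>e\<in>simple_roots d m V (FanoK K) \<Delta>. bil d m V (bvec (Some v)) e \<ge> 0"
  shows "bvec (Some v) \<in> lines d m V (FanoK K) \<Delta>"
proof -
  have v: "Some v \<in> idx V"
    using assms(2) by (simp add: idx_def)
  have "Fano d m V \<in> K"
    using assms(1) unfolding isotropic_subgroup_def by blast
  then have "bvec (Some v) \<in> FanoK K"
    using bvec_in_Fano[OF v] unfolding FanoK_def by blast
  then show ?thesis
    using assms(3) v unfolding lines_def by (simp add: bil_bvec_bvec gram_def idx_def)
qed

theorem corollary3p3:
  fixes d :: nat and m :: "'v::finite \<Rightarrow> 'v \<Rightarrow> nat"
    and V V' :: "'v set" and K K' :: "'v fvec set set"
  assumes "0 < d"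
    and "\<forall>u v. m u v = m v u"
    and "hyperbolic d m V"
    and "isotropic_subgroup d m V K"
    and "extensible d m V K"
    and "subordinate d m V' K' V K"
  shows "extensible d m V' K'"
proof -
  interpret hyperbolic_graph d m V
    using assms(1-3) by unfold_locales
  have V': "V' \<subseteq> V" and K': "isotropic_subgroup d m V' K'" "K' \<subseteq> restr d m V K V'"
    using assms(6) unfolding subordinate_def by auto
  have K_disc: "K \<subseteq> disc d m V" "K' \<subseteq> disc d m V'"
    using assms(4) K'(1) unfolding isotropic_subgroup_def by auto
  obtain \<Delta> where \<Delta>: "weyl_chamber d m V (FanoK K) \<Delta>"
    and lines: "\<forall>v\<in>V. bvec (Some v) \<in> lines d m V (FanoK K) \<Delta>"
    using assms(5) unfolding extensible_def by blast
  obtain \<Delta>' where \<Delta>': "weyl_chamber d m V' (FanoK K') \<Delta>'"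
    and lift: "\<And>e. e \<in> pos_roots d m V' (FanoK K') \<Delta>' \<Longrightarrow>
      \<exists>r\<in>pos_roots d m V (FanoK K) \<Delta>. \<forall>w\<in>Wsp V'. bil d m V' w e = bil d m V w r"
    using subordinate_chamber[OF V' K_disc K'(2) \<Delta>] by blast
  have "bvec (Some v) \<in> lines d m V' (FanoK K') \<Delta>'" if v: "v \<in> V'" for v
  proof (intro vertex_in_lines[OF K'(1) v] ballI)
    fix e assume "e \<in> simple_roots d m V' (FanoK K') \<Delta>'"
    then obtain r where r: "r \<in> pos_roots d m V (FanoK K) \<Delta>"
      and e_r: "\<forall>w\<in>Wsp V'. bil d m V' w e = bil d m V w r"
      using lift unfolding simple_roots_def by blast
    have "bil d m V (bvec (Some v)) r \<ge> 0"
      using pos_roots_pairing_nonneg[OF K_disc(1) \<Delta> _ r] lines V' v unfolding lines_def by blast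
    then show "bil d m V' (bvec (Some v)) e \<ge> 0"
      using e_r bvec_in_Wsp[of "Some v" V'] v by (simp add: idx_def)
  qed
  then show ?thesis
    unfolding extensible_def using \<Delta>' by blast
qed

end
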